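(* Let $G$ be a group with finite generating set $S$, let $H$ be a subgroup of $G$ with finite generating set $T$, and let $w\in(S\cup S^{-1})^+$. Then: (i) the infinite snake, ouroboros and snake reachability problems for $(H,T)$ many-one reduce to the respective problems for $(G,S\cup T)$; (ii) the infinite snake, ouroboros and snake reachability problems for $(G,S)$ many-one reduce to the respective problems for $(G,S\cup\{\overline{w}\})$.
   Context: $\overline{w}$ is the element of $G$ represented by $w$. For a group $K$ with finite generating set $U$, a tileset graph for $(K,U)$ is a finite multigraph $\Gamma=(A,B)$ whose edges are triples $(a,a',u)$ with $a,a'\in A$, $u\in U\cup U^{-1}$, such that $(a,a',u)\in B$ implies $(a',a,u^{-1})\in B$. For $I$ equal to $\mathbb{Z}$, $\mathbb{N}$ or an integer interval, a $\Gamma$-snake is a pair $(\omega,\zeta)$, $\omega:I\to K$ injective, $\zeta:I\to A$, such that whenever $i,i+1\in I$: $d\omega_i:=\omega(i)^{-1}\omega(i+1)\in U\cup U^{-1}$ and $(\zeta(i),\zeta(i+1),d\omega_i)\in B$. A $\Gamma$-ouroboros is such a pair on $\{0,\dots,n\}$, $n\ge3$, with $\omega$ injective on $\{0,\dots,n-1\}$ and $\omega(n)=\omega(0)$. Problems (input $\Gamma$): infinite snake problem — does a $\Gamma$-snake on $\mathbb{Z}$ exist; ouroboros problem — does a $\Gamma$-ouroboros exist; snake reachability problem — given additionally $p,q\in K$, does a $\Gamma$-snake on some $\{0,\dots,n\}$ with $\omega(0)=p$, $\omega(n)=q$ exist. *)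

theory Defs
  imports "HOL-Algebra.Generated_Groups" "HOL-Library.Nat_Bijection"
begin

inductive recfn :: "nat \<Rightarrow> (nat list \<Rightarrow> nat) \<Rightarrow> bool" where
  rf_zero: "recfn n (\<lambda>_. 0)"
| rf_succ: "recfn 1 (\<lambda>xs. Suc (hd xs))"
| rf_proj: "i < n \<Longrightarrow> recfn n (\<lambda>xs. xs ! i)"
| rf_comp: "recfn m f \<Longrightarrow> length gs = m \<Longrightarrow> (\<forall>g\<in>set gs. recfn n g)
            \<Longrightarrow> recfn n (\<lambda>xs. f (map (\<lambda>g. g xs) gs))"
| rf_prim: "recfn n g \<Longrightarrow> recfn (n + 2) h
            \<Longrightarrow> recfn (Suc n) (\<lambda>xs. rec_nat (g (tl xs)) (\<lambda>k r. h (k # r # tl xs)) (hd xs))"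
| rf_mu: "recfn (Suc n) g \<Longrightarrow> (\<forall>xs. length xs = n \<longrightarrow> (\<exists>y. g (y # xs) = 0))
          \<Longrightarrow> recfn n (\<lambda>xs. LEAST y. g (y # xs) = 0)"

definition computable :: "(nat \<Rightarrow> nat) \<Rightarrow> bool" where
  "computable f \<longleftrightarrow> (\<exists>g. recfn 1 g \<and> (\<forall>x. g [x] = f x))"

definition many_one_reducible :: "nat set \<Rightarrow> nat set \<Rightarrow> bool" where
  "many_one_reducible P Q \<longleftrightarrow> (\<exists>f. computable f \<and> (\<forall>x. x \<in> P \<longleftrightarrow> f x \<in> Q))"

text \<open>A letter code l denotes gens!(l div 2) if l is even, its inverse if l is odd.\<close>

definition letter_ok :: "'a list \<Rightarrow> nat \<Rightarrow> bool" where
  "letter_ok gens l \<longleftrightarrow> l div 2 < length gens"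

definition letter_val :: "('a, 'b) monoid_scheme \<Rightarrow> 'a list \<Rightarrow> nat \<Rightarrow> 'a" where
  "letter_val G gens l = (if even l then gens ! (l div 2) else inv\<^bsub>G\<^esub> (gens ! (l div 2)))"

definition word_val :: "('a, 'b) monoid_scheme \<Rightarrow> 'a list \<Rightarrow> nat list \<Rightarrow> 'a" where
  "word_val G gens ws = foldr (\<lambda>l x. letter_val G gens l \<otimes>\<^bsub>G\<^esub> x) ws \<one>\<^bsub>G\<^esub>"

definition gen_set :: "('a, 'b) monoid_scheme \<Rightarrow> 'a list \<Rightarrow> 'a set" where
  "gen_set G gens = set gens \<union> (\<lambda>u. inv\<^bsub>G\<^esub> u) ` set gens"

definition dec_graph :: "nat \<Rightarrow> nat \<times> (nat \<times> nat \<times> nat) list" where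
  "dec_graph c = (case prod_decode c of (n, e) \<Rightarrow>
     (n, map (\<lambda>x. case prod_decode x of (a, r) \<Rightarrow> (case prod_decode r of (a', l) \<Rightarrow> (a, a', l)))
             (list_decode e)))"

definition graph_vertices :: "nat \<Rightarrow> nat set" where
  "graph_vertices c = {0..<fst (dec_graph c)}"

definition graph_edges :: "('a, 'b) monoid_scheme \<Rightarrow> 'a list \<Rightarrow> nat \<Rightarrow> (nat \<times> nat \<times> 'a) set" where
  "graph_edges G gens c = {(a, a', letter_val G gens l) | a a' l. (a, a', l) \<in> set (snd (dec_graph c))}"

definition graph_ok :: "('a, 'b) monoid_scheme \<Rightarrow> 'a list \<Rightarrow> nat \<Rightarrow> bool" where
  "graph_ok G gens c \<longleftrightarrow>
     (\<forall>(a, a', l) \<in> set (snd (dec_graph c)). a < fst (dec_graph c) \<and> a' < fst (dec_graph c) \<and> letter_ok gens l)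
   \<and> (\<forall>(a, a', u) \<in> graph_edges G gens c. (a', a, inv\<^bsub>G\<^esub> u) \<in> graph_edges G gens c)"

definition snake_step :: "('a, 'b) monoid_scheme \<Rightarrow> 'a list \<Rightarrow> (nat \<times> nat \<times> 'a) set
    \<Rightarrow> (int \<Rightarrow> 'a) \<Rightarrow> (int \<Rightarrow> nat) \<Rightarrow> int \<Rightarrow> bool" where
  "snake_step G gens B \<omega> \<zeta> i \<longleftrightarrow>
     inv\<^bsub>G\<^esub> (\<omega> i) \<otimes>\<^bsub>G\<^esub> \<omega> (i + 1) \<in> gen_set G gens
   \<and> (\<zeta> i, \<zeta> (i + 1), inv\<^bsub>G\<^esub> (\<omega> i) \<otimes>\<^bsub>G\<^esub> \<omega> (i + 1)) \<in> B"

definition snake_on :: "('a, 'b) monoid_scheme \<Rightarrow> 'a list \<Rightarrow> nat set \<Rightarrow> (nat \<times> nat \<times> 'a) set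
    \<Rightarrow> int set \<Rightarrow> (int \<Rightarrow> 'a) \<Rightarrow> (int \<Rightarrow> nat) \<Rightarrow> bool" where
  "snake_on G gens A B I \<omega> \<zeta> \<longleftrightarrow>
     (\<forall>i\<in>I. \<omega> i \<in> carrier G \<and> \<zeta> i \<in> A) \<and> inj_on \<omega> I
   \<and> (\<forall>i. i \<in> I \<longrightarrow> i + 1 \<in> I \<longrightarrow> snake_step G gens B \<omega> \<zeta> i)"

definition ouroboros :: "('a, 'b) monoid_scheme \<Rightarrow> 'a list \<Rightarrow> nat set \<Rightarrow> (nat \<times> nat \<times> 'a) set
    \<Rightarrow> int \<Rightarrow> (int \<Rightarrow> 'a) \<Rightarrow> (int \<Rightarrow> nat) \<Rightarrow> bool" where
  "ouroboros G gens A B n \<omega> \<zeta> \<longleftrightarrow> n \<ge> 3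
   \<and> (\<forall>i\<in>{0..n}. \<omega> i \<in> carrier G \<and> \<zeta> i \<in> A) \<and> inj_on \<omega> {0..n-1} \<and> \<omega> n = \<omega> 0
   \<and> (\<forall>i. i \<in> {0..n} \<longrightarrow> i + 1 \<in> {0..n} \<longrightarrow> snake_step G gens B \<omega> \<zeta> i)"

definition infinite_snake_problem :: "('a, 'b) monoid_scheme \<Rightarrow> 'a list \<Rightarrow> nat set" where
  "infinite_snake_problem G gens = {c. graph_ok G gens c \<and>
     (\<exists>\<omega> \<zeta>. snake_on G gens (graph_vertices c) (graph_edges G gens c) UNIV \<omega> \<zeta>)}"

definition ouroboros_problem :: "('a, 'b) monoid_scheme \<Rightarrow> 'a list \<Rightarrow> nat set" where
  "ouroboros_problem G gens = {c. graph_ok G gens c \<and>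
     (\<exists>n \<omega> \<zeta>. ouroboros G gens (graph_vertices c) (graph_edges G gens c) n \<omega> \<zeta>)}"

definition snake_reachability_problem :: "('a, 'b) monoid_scheme \<Rightarrow> 'a list \<Rightarrow> nat set" where
  "snake_reachability_problem G gens = {c. case prod_decode c of (g, r) \<Rightarrow>
     (case prod_decode r of (pc, qc) \<Rightarrow>
       graph_ok G gens g \<and> (\<forall>l \<in> set (list_decode pc) \<union> set (list_decode qc). letter_ok gens l) \<and>
       (\<exists>n \<omega> \<zeta>. n \<ge> 0 \<and> snake_on G gens (graph_vertices g) (graph_edges G gens g) {0..n} \<omega> \<zeta>
          \<and> \<omega> 0 = word_val G gens (list_decode pc) \<and> \<omega> n = word_val G gens (list_decode qc)))}"

end

theory Submission
  imports Defs
begin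

text \<open>
  A tileset graph for \<open>(H, T)\<close> becomes one for \<open>(G, U)\<close>, where \<open>U\<close> is \<open>S @ T\<close> or
  \<open>S @ [w]\<close>, by renumbering its letters: valid letters go to valid letters with the same value
  and invalid letters to invalid ones, so well-formedness is preserved and the renumbering is a
  computable map on codes. A snake in \<open>H\<close> is a snake in \<open>G\<close>. Conversely, all edge labels of
  the graph lie in \<open>H\<close>, so a snake in \<open>G\<close> stays in the left coset of \<open>H\<close> containing its
  start; left translation by the inverse of the start moves it, or an ouroboros, into \<open>H\<close>,
  while a reachability snake already starts at \<open>p \<in> H\<close>. Part (ii) is the case \<open>H = G\<close>.
\<close>

section \<open>Total recursive functions\<close>

definition total_recursive :: "nat \<Rightarrow> (nat list \<Rightarrow> nat) \<Rightarrow> bool" where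
  "total_recursive n f \<longleftrightarrow> (\<exists>g. recfn n g \<and> (\<forall>xs. length xs = n \<longrightarrow> g xs = f xs))"

lemma total_recursive_cong:
  "total_recursive m f \<Longrightarrow> m = n \<Longrightarrow> (\<And>xs. length xs = n \<Longrightarrow> f xs = g xs)
   \<Longrightarrow> total_recursive n g"
  unfolding total_recursive_def by metis

lemma total_recursive_zero: "total_recursive n (\<lambda>_. 0)"
  unfolding total_recursive_def using rf_zero by blast

lemma total_recursive_nth: "i < n \<Longrightarrow> total_recursive n (\<lambda>xs. xs ! i)"
  unfolding total_recursive_def using rf_proj by blast

lemma total_recursive_hd: "total_recursive 1 hd"
  by (rule total_recursive_cong[OF total_recursive_nth[of 0]]) (auto simp: length_Suc_conv)

lemma total_recursive_comp:
  assumes f: "total_recursive m f" and len: "length gs = m" and gs: "\<forall>g\<in>set gs. total_recursive n g"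
  shows "total_recursive n (\<lambda>xs. f (map (\<lambda>g. g xs) gs))"
proof -
  define wit where "wit g = (SOME g'. recfn n g' \<and> (\<forall>xs. length xs = n \<longrightarrow> g' xs = g xs))" for g
  have wit: "recfn n (wit g) \<and> (\<forall>xs. length xs = n \<longrightarrow> wit g xs = g xs)" if "g \<in> set gs" for g
  proof -
    have "\<exists>g'. recfn n g' \<and> (\<forall>xs. length xs = n \<longrightarrow> g' xs = g xs)"
      using gs that unfolding total_recursive_def by blast
    then show ?thesis unfolding wit_def by (rule someI_ex)
  qed
  obtain f' where f': "recfn m f'" "\<forall>xs. length xs = m \<longrightarrow> f' xs = f xs"
    using f unfolding total_recursive_def by blast
  have "recfn n (\<lambda>xs. f' (map (\<lambda>g. g xs) (map wit gs)))"
    using rf_comp[OF f'(1), of "map wit gs"] wit len by (simp del: map_map)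
  moreover have "f' (map (\<lambda>g. g xs) (map wit gs)) = f (map (\<lambda>g. g xs) gs)" if "length xs = n" for xs
  proof -
    have "map (\<lambda>g. g xs) (map wit gs) = map (\<lambda>g. g xs) gs"
      unfolding map_map by (rule map_cong) (use wit that in auto)
    then show ?thesis using f'(2) len by (metis length_map)
  qed
  ultimately show ?thesis
    unfolding total_recursive_def by blast
qed

lemma total_recursive_rec_nat:
  assumes g: "total_recursive n g" and h: "total_recursive (n + 2) h"
  shows "total_recursive (Suc n) (\<lambda>xs. rec_nat (g (tl xs)) (\<lambda>k r. h (k # r # tl xs)) (hd xs))"
proof -
  obtain g' h' where g': "recfn n g'" "\<forall>xs. length xs = n \<longrightarrow> g' xs = g xs"
    and h': "recfn (n + 2) h'" "\<forall>xs. length xs = n + 2 \<longrightarrow> h' xs = h xs"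
    using g h unfolding total_recursive_def by blast
  have "rec_nat (g' (tl xs)) (\<lambda>k r. h' (k # r # tl xs)) (hd xs)
      = rec_nat (g (tl xs)) (\<lambda>k r. h (k # r # tl xs)) (hd xs)" if "length xs = Suc n" for xs
    using g'(2) h'(2) that by simp
  then show ?thesis
    using rf_prim[OF g'(1) h'(1)] unfolding total_recursive_def by blast
qed

lemma total_recursive_Least:
  assumes g: "total_recursive (Suc n) g" and total: "\<forall>xs. length xs = n \<longrightarrow> (\<exists>y. g (y # xs) = 0)"
  shows "total_recursive n (\<lambda>xs. LEAST y. g (y # xs) = 0)"
proof -
  obtain g' where g': "recfn (Suc n) g'" "\<forall>xs. length xs = Suc n \<longrightarrow> g' xs = g xs"
    using g unfolding total_recursive_def by blast
  have "(LEAST y. g' (y # xs) = 0) = (LEAST y. g (y # xs) = 0)" if "length xs = n" for xs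
    using g'(2) that by simp
  then show ?thesis
    using rf_mu[OF g'(1)] g'(2) total unfolding total_recursive_def by fastforce
qed

lemma computable_iff_total_recursive: "computable f \<longleftrightarrow> total_recursive 1 (\<lambda>xs. f (hd xs))"
  unfolding computable_def total_recursive_def
  by (metis (no_types, lifting) One_nat_def length_Suc_conv length_0_conv list.sel(1))

lemma total_recursive_computable_comp:
  "computable f \<Longrightarrow> total_recursive n g \<Longrightarrow> total_recursive n (\<lambda>xs. f (g xs))"
  unfolding computable_iff_total_recursive using total_recursive_comp[of 1 "\<lambda>xs. f (hd xs)" "[g]" n] by simp

lemma computable_Suc: "computable Suc"
  unfolding computable_def using rf_succ by force

lemma total_recursive_Suc: "total_recursive n g \<Longrightarrow> total_recursive n (\<lambda>xs. Suc (g xs))"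
  by (rule total_recursive_computable_comp[OF computable_Suc])

lemma total_recursive_const: "total_recursive n (\<lambda>_. k)"
  by (induction k) (simp_all add: total_recursive_zero total_recursive_Suc)

lemma total_recursive_funpow:
  assumes f: "computable f" and k: "total_recursive n k" and s: "total_recursive n s"
  shows "total_recursive n (\<lambda>xs. (f ^^ k xs) (s xs))"
proof -
  have step: "total_recursive (1 + 2) (\<lambda>ys. f (ys ! 1))"
    by (rule total_recursive_computable_comp[OF f total_recursive_nth]) simp
  have iterate: "rec_nat s (\<lambda>k r. f r) k = (f ^^ k) s" for s k
    by (induction k) simp_all
  have "total_recursive 2 (\<lambda>xs. (f ^^ (xs ! 0)) (xs ! 1))"
    by (rule total_recursive_cong[OF total_recursive_rec_nat[OF total_recursive_nth step]])
      (auto simp: length_Suc_conv numeral_2_eq_2 iterate)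
  from total_recursive_comp[OF this, of "[k, s]" n] k s show ?thesis by simp
qed

lemma total_recursive_add:
  "total_recursive n g \<Longrightarrow> total_recursive n h \<Longrightarrow> total_recursive n (\<lambda>xs. g xs + h xs)"
  using total_recursive_funpow[OF computable_Suc, of n g h] by simp

lemma computable_pred: "computable (\<lambda>x. x - 1)"
proof -
  have pred: "rec_nat 0 (\<lambda>k r. k) x = x - 1" for x :: nat by (cases x) simp_all
  show ?thesis
    unfolding computable_iff_total_recursive
    by (rule total_recursive_cong[OF total_recursive_rec_nat[OF total_recursive_zero total_recursive_nth[of 0]]])
      (simp_all add: pred)
qed

lemma total_recursive_diff:
  assumes "total_recursive n g" "total_recursive n h"
  shows "total_recursive n (\<lambda>xs. g xs - h xs)"
proof -
  have "((\<lambda>x. x - 1) ^^ b) a = a - b" for a b :: nat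
    by (induction b) simp_all
  then show ?thesis
    using total_recursive_funpow[OF computable_pred assms(2,1)] by simp
qed

lemma total_recursive_If:
  assumes "total_recursive n c" "total_recursive n a" "total_recursive n b"
  shows "total_recursive n (\<lambda>xs. if c xs = 0 then a xs else b xs)"
proof -
  have case_zero: "rec_nat a (\<lambda>k r. b) c = (if c = 0 then a else b)" for a b c :: nat
    by (cases c) simp_all
  have "total_recursive 3 (\<lambda>xs. if xs ! 0 = 0 then xs ! 1 else xs ! 2)"
    by (rule total_recursive_cong[OF total_recursive_rec_nat[OF total_recursive_nth[of 0 2] total_recursive_nth[of 3]]])
      (auto simp: length_Suc_conv numeral_3_eq_3 case_zero)
  from total_recursive_comp[OF this, of "[c, a, b]" n] assms show ?thesis
    by (simp cong: if_cong)
qed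

lemma total_recursive_If_less:
  assumes "total_recursive n a" "total_recursive n b" "total_recursive n c" "total_recursive n d"
  shows "total_recursive n (\<lambda>xs. if a xs < b xs then c xs else d xs)"
proof -
  have "total_recursive n (\<lambda>xs. if Suc (a xs) - b xs = 0 then c xs else d xs)"
    using assms by (intro total_recursive_If total_recursive_diff total_recursive_Suc)
  then show ?thesis
    by (rule total_recursive_cong) auto
qed

lemma computable_triangle: "computable triangle"
proof -
  have step: "total_recursive (0 + 2) (\<lambda>ys. ys ! 1 + Suc (ys ! 0))"
    by (intro total_recursive_add total_recursive_Suc total_recursive_nth) simp_all
  have triangle: "rec_nat 0 (\<lambda>k r. Suc (r + k)) x = triangle x" for x by (induction x) simp_all
  show ?thesis
    unfolding computable_iff_total_recursive
    by (rule total_recursive_cong[OF total_recursive_rec_nat[OF total_recursive_zero step]])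
      (simp_all add: triangle)
qed

section \<open>Computability of pair and list coding\<close>

lemma total_recursive_prod_encode:
  "total_recursive n g \<Longrightarrow> total_recursive n h \<Longrightarrow> total_recursive n (\<lambda>xs. prod_encode (g xs, h xs))"
  unfolding prod_encode_def
  by (simp add: total_recursive_add total_recursive_computable_comp[OF computable_triangle])

text \<open>Since \<open>prod_encode (m, n) = triangle (m + n) + m\<close>, the code \<open>c\<close> lies on the diagonal
  \<open>m + n = diagonal_index c\<close>.\<close>

definition diagonal_index :: "nat \<Rightarrow> nat" where
  "diagonal_index c = (LEAST d. c < triangle (Suc d))"

lemma le_triangle: "n \<le> triangle n"
  by (induction n) simp_all

lemma diagonal_index_bounds:
  "triangle (diagonal_index c) \<le> c \<and> c < triangle (Suc (diagonal_index c))"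
proof
  show "c < triangle (Suc (diagonal_index c))"
    unfolding diagonal_index_def by (rule LeastI[of _ c]) (use le_triangle[of "Suc c"] in simp)
  show "triangle (diagonal_index c) \<le> c"
  proof (cases "diagonal_index c")
    case (Suc d)
    then have "\<not> c < triangle (Suc d)"
      using not_less_Least[of d "\<lambda>d. c < triangle (Suc d)"] unfolding diagonal_index_def by simp
    then show ?thesis using Suc by simp
  qed simp
qed

lemma prod_decode_diagonal_index:
  "prod_decode c = (c - triangle (diagonal_index c), diagonal_index c - (c - triangle (diagonal_index c)))"
proof -
  have "prod_encode (c - triangle (diagonal_index c), diagonal_index c - (c - triangle (diagonal_index c))) = c"
    using diagonal_index_bounds[of c] unfolding prod_encode_def by auto
  then show ?thesis by (metis prod_encode_inverse)
qed

lemma computable_diagonal_index: "computable diagonal_index"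
proof -
  let ?g = "\<lambda>ys. Suc (ys ! 1) - triangle (Suc (ys ! 0))"
  have "total_recursive (Suc 1) ?g"
    by (intro total_recursive_diff total_recursive_Suc total_recursive_nth
        total_recursive_computable_comp[OF computable_triangle]) simp_all
  moreover have "\<exists>y. ?g (y # [c]) = 0" for c
    using le_triangle[of "Suc c"] by (intro exI[of _ c]) simp
  then have "\<forall>xs. length xs = 1 \<longrightarrow> (\<exists>y. ?g (y # xs) = 0)"
    by (auto simp: length_Suc_conv)
  ultimately show ?thesis
    unfolding computable_iff_total_recursive diagonal_index_def
    by (rule total_recursive_cong[OF total_recursive_Least], simp, intro arg_cong[where f = Least] ext)
      (auto simp: length_Suc_conv)
qed

lemma total_recursive_fst_prod_decode:
  "total_recursive n g \<Longrightarrow> total_recursive n (\<lambda>xs. fst (prod_decode (g xs)))"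
  unfolding prod_decode_diagonal_index
  by (simp add: total_recursive_diff total_recursive_computable_comp[OF computable_triangle]
      total_recursive_computable_comp[OF computable_diagonal_index])

lemma total_recursive_snd_prod_decode:
  "total_recursive n g \<Longrightarrow> total_recursive n (\<lambda>xs. snd (prod_decode (g xs)))"
  unfolding prod_decode_diagonal_index
  by (simp add: total_recursive_diff total_recursive_computable_comp[OF computable_triangle]
      total_recursive_computable_comp[OF computable_diagonal_index])

text \<open>A state codes a pair \<open>(e, acc)\<close>: \<open>e\<close> codes the rest of the list still to be processed,
  \<open>acc\<close> the reversed image of the part already processed. Since a list is never longer than its
  code \<open>e\<close>, \<open>e\<close> steps suffice.\<close>

definition rev_map_step :: "(nat \<Rightarrow> nat) \<Rightarrow> nat \<Rightarrow> nat" where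
  "rev_map_step h s = (case prod_decode s of (e, acc) \<Rightarrow>
     if e = 0 then s
     else case prod_decode (e - 1) of (x, e') \<Rightarrow> prod_encode (e', Suc (prod_encode (h x, acc))))"

definition rev_map_code :: "(nat \<Rightarrow> nat) \<Rightarrow> nat \<Rightarrow> nat" where
  "rev_map_code h e = snd (prod_decode ((rev_map_step h ^^ e) (prod_encode (e, 0))))"

lemma funpow_rev_map_step:
  "length xs \<le> k \<Longrightarrow> (rev_map_step h ^^ k) (prod_encode (list_encode xs, list_encode acc))
     = prod_encode (0, list_encode (rev (map h xs) @ acc))"
proof (induction xs arbitrary: k acc)
  case Nil
  have "rev_map_step h (prod_encode (0, list_encode acc)) = prod_encode (0, list_encode acc)"
    by (simp add: rev_map_step_def)
  then show ?case by (induction k) simp_all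
next
  case (Cons x xs)
  then obtain k' where "k = Suc k'" "length xs \<le> k'" by (cases k) auto
  moreover have "rev_map_step h (prod_encode (list_encode (x # xs), list_encode acc))
      = prod_encode (list_encode xs, list_encode (h x # acc))"
    by (simp add: rev_map_step_def)
  ultimately show ?case
    using Cons.IH[of _ "h x # acc"] by (simp add: funpow_Suc_right del: funpow.simps)
qed

lemma length_le_list_encode: "length xs \<le> list_encode xs"
  by (induction xs) (auto intro: le_trans[OF _ le_prod_encode_2])

lemma rev_map_code_list_encode: "rev_map_code h (list_encode xs) = list_encode (rev (map h xs))"
  unfolding rev_map_code_def
  using funpow_rev_map_step[OF length_le_list_encode, of xs h "[]"] by simp

lemma computable_rev_map_step:
  assumes "computable h" shows "computable (rev_map_step h)"
  unfolding computable_iff_total_recursive rev_map_step_def case_prod_unfold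
  by (intro total_recursive_If total_recursive_fst_prod_decode total_recursive_snd_prod_decode
      total_recursive_prod_encode total_recursive_Suc total_recursive_diff total_recursive_const
      total_recursive_hd total_recursive_computable_comp[OF assms])

lemma computable_rev_map_code:
  assumes "computable h" shows "computable (rev_map_code h)"
  unfolding computable_iff_total_recursive rev_map_code_def
  by (intro total_recursive_snd_prod_decode total_recursive_funpow[OF computable_rev_map_step[OF assms]]
      total_recursive_prod_encode total_recursive_hd total_recursive_const)

lemma computable_compose: "computable f \<Longrightarrow> computable g \<Longrightarrow> computable (\<lambda>x. f (g x))"
  unfolding computable_iff_total_recursive[of "\<lambda>x. f (g x)"]
  by (rule total_recursive_computable_comp) (simp_all add: computable_iff_total_recursive)

lemma computable_id: "computable id"
  unfolding computable_iff_total_recursive id_def by (rule total_recursive_hd)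

lemma computable_map_list_code:
  assumes "computable h" shows "computable (\<lambda>e. list_encode (map h (list_decode e)))"
proof -
  have "rev_map_code h e = list_encode (rev (map h (list_decode e)))" for e
    using rev_map_code_list_encode[of h "list_decode e"] by simp
  then have "list_encode (map h (list_decode e)) = rev_map_code id (rev_map_code h e)" for e
    by (simp add: rev_map_code_list_encode)
  then show ?thesis
    using computable_compose[OF computable_rev_map_code[OF computable_id] computable_rev_map_code[OF assms]]
    by simp
qed

section \<open>Relabelling encoded instances\<close>

definition relabel_edge_code :: "(nat \<Rightarrow> nat) \<Rightarrow> nat \<Rightarrow> nat" where
  "relabel_edge_code \<phi> x = (case prod_decode x of (a, r) \<Rightarrow> case prod_decode r of (a', l) \<Rightarrow>
     prod_encode (a, prod_encode (a', \<phi> l)))"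

definition relabel_graph_code :: "(nat \<Rightarrow> nat) \<Rightarrow> nat \<Rightarrow> nat" where
  "relabel_graph_code \<phi> c = (case prod_decode c of (n, e) \<Rightarrow>
     prod_encode (n, list_encode (map (relabel_edge_code \<phi>) (list_decode e))))"

definition relabel_instance_code :: "(nat \<Rightarrow> nat) \<Rightarrow> nat \<Rightarrow> nat" where
  "relabel_instance_code \<phi> c = (case prod_decode c of (g, r) \<Rightarrow> case prod_decode r of (p, q) \<Rightarrow>
     prod_encode (relabel_graph_code \<phi> g,
       prod_encode (list_encode (map \<phi> (list_decode p)), list_encode (map \<phi> (list_decode q)))))"

lemma computable_relabel_graph_code:
  assumes "computable \<phi>" shows "computable (relabel_graph_code \<phi>)"
proof -
  have edge: "computable (relabel_edge_code \<phi>)"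
    unfolding computable_iff_total_recursive relabel_edge_code_def case_prod_unfold
    by (intro total_recursive_fst_prod_decode total_recursive_snd_prod_decode
        total_recursive_prod_encode total_recursive_hd total_recursive_computable_comp[OF assms])
  show ?thesis
    unfolding computable_iff_total_recursive relabel_graph_code_def case_prod_unfold
    by (intro total_recursive_fst_prod_decode total_recursive_snd_prod_decode
        total_recursive_prod_encode total_recursive_hd
        total_recursive_computable_comp[OF computable_map_list_code[OF edge]])
qed

lemma computable_relabel_instance_code:
  assumes "computable \<phi>" shows "computable (relabel_instance_code \<phi>)"
  unfolding computable_iff_total_recursive relabel_instance_code_def case_prod_unfold
  by (intro total_recursive_fst_prod_decode total_recursive_snd_prod_decode
      total_recursive_prod_encode total_recursive_hd
      total_recursive_computable_comp[OF computable_relabel_graph_code[OF assms]]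
      total_recursive_computable_comp[OF computable_map_list_code[OF assms]])

lemma dec_graph_relabel_graph_code:
  "dec_graph (relabel_graph_code \<phi> c)
     = (fst (dec_graph c), map (\<lambda>(a, a', l). (a, a', \<phi> l)) (snd (dec_graph c)))"
  unfolding dec_graph_def relabel_graph_code_def relabel_edge_code_def
  by (simp split: prod.splits)

lemma graph_vertices_relabel_graph_code:
  "graph_vertices (relabel_graph_code \<phi> c) = graph_vertices c"
  unfolding graph_vertices_def dec_graph_relabel_graph_code by simp

lemma prod_decode_relabel_instance_code:
  "prod_decode (relabel_instance_code \<phi> c) = (case prod_decode c of (g, r) \<Rightarrow> case prod_decode r of (p, q) \<Rightarrow>
     (relabel_graph_code \<phi> g,
      prod_encode (list_encode (map \<phi> (list_decode p)), list_encode (map \<phi> (list_decode q)))))"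
  unfolding relabel_instance_code_def by (simp split: prod.splits)

definition graph_code_wf :: "'a list \<Rightarrow> nat \<Rightarrow> bool" where
  "graph_code_wf gens c \<longleftrightarrow> (\<forall>(a, a', l) \<in> set (snd (dec_graph c)).
     a < fst (dec_graph c) \<and> a' < fst (dec_graph c) \<and> letter_ok gens l)"

lemma graph_ok_iff:
  "graph_ok G gens c \<longleftrightarrow> graph_code_wf gens c
     \<and> (\<forall>(a, a', u) \<in> graph_edges G gens c. (a', a, inv\<^bsub>G\<^esub> u) \<in> graph_edges G gens c)"
  unfolding graph_ok_def graph_code_wf_def by simp

lemma letter_val_mem_gen_set: "letter_ok gens l \<Longrightarrow> letter_val G gens l \<in> gen_set G gens"
  unfolding letter_ok_def letter_val_def gen_set_def by auto

section \<open>Snakes in a subgroup\<close>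

lemma (in group) snake_step_translate:
  assumes "g \<in> carrier G" "\<omega> i \<in> carrier G" "\<omega> (i + 1) \<in> carrier G"
  shows "snake_step G U B (\<lambda>i. g \<otimes> \<omega> i) \<zeta> i \<longleftrightarrow> snake_step G U B \<omega> \<zeta> i"
proof -
  have "inv (g \<otimes> \<omega> i) \<otimes> (g \<otimes> \<omega> (i + 1)) = inv (\<omega> i) \<otimes> \<omega> (i + 1)"
    using assms by (simp add: inv_mult_group m_assoc[symmetric]) (simp add: m_assoc)
  then show ?thesis
    unfolding snake_step_def by simp
qed

lemma (in group) snake_on_translate:
  assumes snake: "snake_on G U A B I \<omega> \<zeta>" and g: "g \<in> carrier G"
  shows "snake_on G U A B I (\<lambda>i. g \<otimes> \<omega> i) \<zeta>"
proof -
  have carrier: "\<forall>i\<in>I. \<omega> i \<in> carrier G"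
    using snake unfolding snake_on_def by blast
  then have "inj_on (\<lambda>i. g \<otimes> \<omega> i) I"
    using snake g unfolding snake_on_def inj_on_def by simp
  then show ?thesis
    using snake g carrier snake_step_translate unfolding snake_on_def by simp
qed

lemma (in group) ouroboros_translate:
  assumes ouro: "ouroboros G U A B n \<omega> \<zeta>" and g: "g \<in> carrier G"
  shows "ouroboros G U A B n (\<lambda>i. g \<otimes> \<omega> i) \<zeta>"
proof -
  have carrier: "\<forall>i\<in>{0..n}. \<omega> i \<in> carrier G"
    using ouro unfolding ouroboros_def by blast
  then have "inj_on (\<lambda>i. g \<otimes> \<omega> i) {0..n-1}"
    using ouro g unfolding ouroboros_def inj_on_def by simp
  then show ?thesis
    using ouro g carrier snake_step_translate unfolding ouroboros_def by simp
qed

lemma (in group) subgroup_mem_iff_of_step: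
  assumes H: "subgroup H G" and x: "x \<in> carrier G" and y: "y \<in> carrier G" and step: "inv x \<otimes> y \<in> H"
  shows "x \<in> H \<longleftrightarrow> y \<in> H"
proof -
  have "y = x \<otimes> (inv x \<otimes> y)" and "x = y \<otimes> inv (inv x \<otimes> y)"
    using x y by (simp_all add: m_assoc[symmetric] inv_mult_group)
  then show ?thesis
    using step subgroup.m_closed[OF H] subgroup.m_inv_closed[OF H] by metis
qed

lemma (in group) walk_subgroup_iff:
  fixes \<omega> :: "int \<Rightarrow> 'a" and i j :: int
  assumes H: "subgroup H G" and "i \<le> j" and carrier: "\<And>k. i \<le> k \<Longrightarrow> k \<le> j \<Longrightarrow> \<omega> k \<in> carrier G"
    and steps: "\<And>k. i \<le> k \<Longrightarrow> k < j \<Longrightarrow> inv (\<omega> k) \<otimes> \<omega> (k + 1) \<in> H"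
  shows "\<omega> i \<in> H \<longleftrightarrow> \<omega> j \<in> H"
  using assms(2,3,4)
proof (induction j rule: int_ge_induct)
  case (step j)
  then show ?case
    using subgroup_mem_iff_of_step[OF H, of "\<omega> j" "\<omega> (j + 1)"] by simp
qed simp

locale generator_relabelling =
  fixes G :: "('a, 'b) monoid_scheme" and H :: "'a set" and T U :: "'a list" and \<phi> :: "nat \<Rightarrow> nat"
  assumes group: "group G" and subgroup: "subgroup H G" and generators_subgroup: "set T \<subseteq> H"
    and letter_ok_relabel: "\<And>l. letter_ok U (\<phi> l) \<longleftrightarrow> letter_ok T l"
    and letter_val_relabel: "\<And>l. letter_ok T l \<Longrightarrow> letter_val G U (\<phi> l) = letter_val G T l"
begin

abbreviation K :: "('a, 'b) monoid_scheme" where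
  "K \<equiv> G\<lparr>carrier := H\<rparr>"

lemma inv_subgroup: "x \<in> H \<Longrightarrow> inv\<^bsub>K\<^esub> x = inv\<^bsub>G\<^esub> x"
  using group.m_inv_consistent[OF group subgroup] .

lemma letter_val_subgroup:
  assumes "letter_ok T l"
  shows "letter_val K T l = letter_val G T l" and "letter_val G T l \<in> H"
proof -
  have "T ! (l div 2) \<in> H"
    using assms generators_subgroup unfolding letter_ok_def by auto
  then show "letter_val K T l = letter_val G T l" and "letter_val G T l \<in> H"
    unfolding letter_val_def using inv_subgroup subgroup.m_inv_closed[OF subgroup] by simp_all
qed

lemma word_val_relabel:
  "\<forall>l\<in>set ws. letter_ok T l \<Longrightarrow> word_val K T ws = word_val G U (map \<phi> ws)"
  by (induction ws) (simp_all add: word_val_def letter_val_subgroup letter_val_relabel)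

lemma word_val_subgroup: "\<forall>l\<in>set ws. letter_ok T l \<Longrightarrow> word_val K T ws \<in> H"
  by (induction ws)
    (simp_all add: word_val_def letter_val_subgroup subgroup.one_closed[OF subgroup] subgroup.m_closed[OF subgroup])

lemma graph_code_wf_relabel: "graph_code_wf U (relabel_graph_code \<phi> c) \<longleftrightarrow> graph_code_wf T c"
  unfolding graph_code_wf_def dec_graph_relabel_graph_code using letter_ok_relabel by auto

lemma graph_edges_relabel:
  assumes "graph_code_wf T c"
  shows "graph_edges G U (relabel_graph_code \<phi> c) = graph_edges K T c"
proof -
  have "letter_val G U (\<phi> l) = letter_val K T l" if "(a, a', l) \<in> set (snd (dec_graph c))" for a a' l
    using assms that letter_val_relabel letter_val_subgroup unfolding graph_code_wf_def by fastforce
  then show ?thesis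
    unfolding graph_edges_def dec_graph_relabel_graph_code by force
qed

lemma graph_edges_labels:
  assumes "graph_code_wf T c"
  shows "graph_edges K T c \<subseteq> UNIV \<times> UNIV \<times> (H \<inter> gen_set K T \<inter> gen_set G U)"
proof
  fix e assume "e \<in> graph_edges K T c"
  then obtain a a' l where e: "e = (a, a', letter_val K T l)" and l: "(a, a', l) \<in> set (snd (dec_graph c))"
    unfolding graph_edges_def by blast
  have "letter_ok T l"
    using assms l unfolding graph_code_wf_def by fastforce
  then show "e \<in> UNIV \<times> UNIV \<times> (H \<inter> gen_set K T \<inter> gen_set G U)"
    unfolding e using letter_val_subgroup letter_val_relabel letter_ok_relabel
      letter_val_mem_gen_set[of T l K] letter_val_mem_gen_set[of U "\<phi> l" G] by auto
qed

lemma graph_ok_relabel: "graph_ok G U (relabel_graph_code \<phi> c) \<longleftrightarrow> graph_ok K T c"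
proof (cases "graph_code_wf T c")
  case True
  have "inv\<^bsub>G\<^esub> u = inv\<^bsub>K\<^esub> u" if "(a, a', u) \<in> graph_edges K T c" for a a' u
    using graph_edges_labels[OF True] that inv_subgroup by auto
  then show ?thesis
    unfolding graph_ok_iff graph_code_wf_relabel graph_edges_relabel[OF True] by fastforce
next
  case False
  then show ?thesis
    unfolding graph_ok_iff graph_code_wf_relabel by simp
qed

context
  fixes B :: "(nat \<times> nat \<times> 'a) set"
  assumes labels: "B \<subseteq> UNIV \<times> UNIV \<times> (H \<inter> gen_set K T \<inter> gen_set G U)"
begin

lemma snake_step_subgroup_iff:
  assumes "\<omega> i \<in> H"
  shows "snake_step K T B \<omega> \<zeta> i \<longleftrightarrow> snake_step G U B \<omega> \<zeta> i"
proof -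
  have step: "inv\<^bsub>K\<^esub> (\<omega> i) \<otimes>\<^bsub>K\<^esub> \<omega> (i + 1) = inv\<^bsub>G\<^esub> (\<omega> i) \<otimes>\<^bsub>G\<^esub> \<omega> (i + 1)"
    using inv_subgroup[OF assms] by simp
  have "u \<in> gen_set K T" "u \<in> gen_set G U" if "(a, a', u) \<in> B" for a a' u
    using labels that by auto
  then show ?thesis
    unfolding snake_step_def step by blast
qed

lemma snake_on_subgroup_iff:
  assumes "\<forall>i\<in>I. \<omega> i \<in> H"
  shows "snake_on K T A B I \<omega> \<zeta> \<longleftrightarrow> snake_on G U A B I \<omega> \<zeta>"
  using assms subgroup.subset[OF subgroup] unfolding snake_on_def
  by (auto simp: snake_step_subgroup_iff)

lemma ouroboros_subgroup_iff:
  assumes "\<forall>i\<in>{0..n}. \<omega> i \<in> H"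
  shows "ouroboros K T A B n \<omega> \<zeta> \<longleftrightarrow> ouroboros G U A B n \<omega> \<zeta>"
  using assms subgroup.subset[OF subgroup] unfolding ouroboros_def
  by (auto simp: snake_step_subgroup_iff)

lemma snake_walk_subgroup_iff:
  assumes "i \<le> j" and "\<And>k. i \<le> k \<Longrightarrow> k \<le> j \<Longrightarrow> \<omega> k \<in> carrier G"
    and "\<And>k. i \<le> k \<Longrightarrow> k < j \<Longrightarrow> snake_step G U B \<omega> \<zeta> k"
  shows "\<omega> i \<in> H \<longleftrightarrow> \<omega> j \<in> H"
proof (rule group.walk_subgroup_iff[OF group subgroup assms(1,2)])
  fix k assume "i \<le> k" "k < j"
  then have "snake_step G U B \<omega> \<zeta> k" by (rule assms(3))
  then show "inv\<^bsub>G\<^esub> (\<omega> k) \<otimes>\<^bsub>G\<^esub> \<omega> (k + 1) \<in> H"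
    using labels unfolding snake_step_def by auto
qed

lemma snake_UNIV_subgroup:
  assumes snake: "snake_on G U A B UNIV \<omega> \<zeta>" and "\<omega> 0 \<in> H"
  shows "\<omega> i \<in> H"
proof -
  have "\<omega> k \<in> carrier G" "snake_step G U B \<omega> \<zeta> k" for k
    using snake unfolding snake_on_def by simp_all
  then show ?thesis
    using snake_walk_subgroup_iff[of 0 i \<omega> \<zeta>] snake_walk_subgroup_iff[of i 0 \<omega> \<zeta>] assms(2)
    by (cases "0 \<le> i") simp_all
qed

lemma snake_interval_subgroup:
  assumes "\<forall>i\<in>{0..n}. \<omega> i \<in> carrier G"
    and "\<forall>i. i \<in> {0..n} \<longrightarrow> i + 1 \<in> {0..n} \<longrightarrow> snake_step G U B \<omega> \<zeta> i" and "\<omega> 0 \<in> H"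
  shows "\<forall>i\<in>{0..n}. \<omega> i \<in> H"
  using snake_walk_subgroup_iff[of 0 _ \<omega> \<zeta>] assms by auto

lemma ex_infinite_snake_subgroup_iff:
  "(\<exists>\<omega> \<zeta>. snake_on K T A B UNIV \<omega> \<zeta>) \<longleftrightarrow> (\<exists>\<omega> \<zeta>. snake_on G U A B UNIV \<omega> \<zeta>)"
proof
  assume "\<exists>\<omega> \<zeta>. snake_on K T A B UNIV \<omega> \<zeta>"
  then obtain \<omega> \<zeta> where snake: "snake_on K T A B UNIV \<omega> \<zeta>" by blast
  then have "\<forall>i\<in>UNIV. \<omega> i \<in> H"
    unfolding snake_on_def by simp
  then show "\<exists>\<omega> \<zeta>. snake_on G U A B UNIV \<omega> \<zeta>"
    using snake snake_on_subgroup_iff by blast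
next
  assume "\<exists>\<omega> \<zeta>. snake_on G U A B UNIV \<omega> \<zeta>"
  then obtain \<omega> \<zeta> where snake: "snake_on G U A B UNIV \<omega> \<zeta>" by blast
  then have start: "\<omega> 0 \<in> carrier G"
    unfolding snake_on_def by simp
  define \<omega>' where "\<omega>' = (\<lambda>i. inv\<^bsub>G\<^esub> (\<omega> 0) \<otimes>\<^bsub>G\<^esub> \<omega> i)"
  have snake': "snake_on G U A B UNIV \<omega>' \<zeta>"
    unfolding \<omega>'_def using group.snake_on_translate[OF group snake] group.inv_closed[OF group start] .
  have "\<omega>' 0 \<in> H"
    unfolding \<omega>'_def using group.l_inv[OF group start] subgroup.one_closed[OF subgroup] by simp
  then have "\<forall>i\<in>UNIV. \<omega>' i \<in> H"
    using snake_UNIV_subgroup[OF snake'] by blast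
  then show "\<exists>\<omega> \<zeta>. snake_on K T A B UNIV \<omega> \<zeta>"
    using snake' snake_on_subgroup_iff by blast
qed

lemma ex_ouroboros_subgroup_iff:
  "(\<exists>n \<omega> \<zeta>. ouroboros K T A B n \<omega> \<zeta>) \<longleftrightarrow> (\<exists>n \<omega> \<zeta>. ouroboros G U A B n \<omega> \<zeta>)"
proof
  assume "\<exists>n \<omega> \<zeta>. ouroboros K T A B n \<omega> \<zeta>"
  then obtain n \<omega> \<zeta> where ouro: "ouroboros K T A B n \<omega> \<zeta>" by blast
  then have "\<forall>i\<in>{0..n}. \<omega> i \<in> H"
    unfolding ouroboros_def by simp
  then show "\<exists>n \<omega> \<zeta>. ouroboros G U A B n \<omega> \<zeta>"
    using ouro ouroboros_subgroup_iff by blast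
next
  assume "\<exists>n \<omega> \<zeta>. ouroboros G U A B n \<omega> \<zeta>"
  then obtain n \<omega> \<zeta> where ouro: "ouroboros G U A B n \<omega> \<zeta>" by blast
  then have start: "\<omega> 0 \<in> carrier G"
    unfolding ouroboros_def by simp
  define \<omega>' where "\<omega>' = (\<lambda>i. inv\<^bsub>G\<^esub> (\<omega> 0) \<otimes>\<^bsub>G\<^esub> \<omega> i)"
  have ouro': "ouroboros G U A B n \<omega>' \<zeta>"
    unfolding \<omega>'_def using group.ouroboros_translate[OF group ouro] group.inv_closed[OF group start] .
  have "\<omega>' 0 \<in> H"
    unfolding \<omega>'_def using group.l_inv[OF group start] subgroup.one_closed[OF subgroup] by simp
  then have "\<forall>i\<in>{0..n}. \<omega>' i \<in> H"
    using snake_interval_subgroup ouro' unfolding ouroboros_def by blast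
  then show "\<exists>n \<omega> \<zeta>. ouroboros K T A B n \<omega> \<zeta>"
    using ouro' ouroboros_subgroup_iff by blast
qed

lemma ex_reachability_snake_subgroup_iff:
  assumes "p \<in> H"
  shows "(\<exists>n \<omega> \<zeta>. n \<ge> 0 \<and> snake_on K T A B {0..n} \<omega> \<zeta> \<and> \<omega> 0 = p \<and> \<omega> n = q)
     \<longleftrightarrow> (\<exists>n \<omega> \<zeta>. n \<ge> 0 \<and> snake_on G U A B {0..n} \<omega> \<zeta> \<and> \<omega> 0 = p \<and> \<omega> n = q)"
proof -
  have "snake_on K T A B {0..n} \<omega> \<zeta> \<longleftrightarrow> snake_on G U A B {0..n} \<omega> \<zeta>" if "\<omega> 0 = p" for n \<omega> \<zeta>
  proof
    assume snake: "snake_on K T A B {0..n} \<omega> \<zeta>"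
    then have "\<forall>i\<in>{0..n}. \<omega> i \<in> H"
      unfolding snake_on_def by simp
    then show "snake_on G U A B {0..n} \<omega> \<zeta>"
      using snake snake_on_subgroup_iff by blast
  next
    assume snake: "snake_on G U A B {0..n} \<omega> \<zeta>"
    then have "\<forall>i\<in>{0..n}. \<omega> i \<in> H"
      using snake_interval_subgroup assms that unfolding snake_on_def by blast
    then show "snake_on K T A B {0..n} \<omega> \<zeta>"
      using snake snake_on_subgroup_iff by blast
  qed
  then show ?thesis by blast
qed

end

lemma infinite_snake_problem_relabel:
  "c \<in> infinite_snake_problem K T \<longleftrightarrow> relabel_graph_code \<phi> c \<in> infinite_snake_problem G U"
proof (cases "graph_ok K T c")
  case True
  then have wf: "graph_code_wf T c"
    unfolding graph_ok_iff by blast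
  show ?thesis
    unfolding infinite_snake_problem_def
    using True graph_ok_relabel graph_vertices_relabel_graph_code graph_edges_relabel[OF wf]
      ex_infinite_snake_subgroup_iff[OF graph_edges_labels[OF wf]] by simp
qed (simp add: infinite_snake_problem_def graph_ok_relabel)

lemma ouroboros_problem_relabel:
  "c \<in> ouroboros_problem K T \<longleftrightarrow> relabel_graph_code \<phi> c \<in> ouroboros_problem G U"
proof (cases "graph_ok K T c")
  case True
  then have wf: "graph_code_wf T c"
    unfolding graph_ok_iff by blast
  show ?thesis
    unfolding ouroboros_problem_def
    using True graph_ok_relabel graph_vertices_relabel_graph_code graph_edges_relabel[OF wf]
      ex_ouroboros_subgroup_iff[OF graph_edges_labels[OF wf]] by simp
qed (simp add: ouroboros_problem_def graph_ok_relabel)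

lemma snake_reachability_problem_relabel:
  "c \<in> snake_reachability_problem K T \<longleftrightarrow> relabel_instance_code \<phi> c \<in> snake_reachability_problem G U"
proof -
  obtain g r p q where c: "prod_decode c = (g, r)" "prod_decode r = (p, q)"
    by (metis surj_pair)
  let ?P = "list_decode p" and ?Q = "list_decode q"
  have letters: "(\<forall>l \<in> set (map \<phi> ?P) \<union> set (map \<phi> ?Q). letter_ok U l) \<longleftrightarrow> (\<forall>l \<in> set ?P \<union> set ?Q. letter_ok T l)"
    using letter_ok_relabel by auto
  show ?thesis
  proof (cases "graph_ok K T g \<and> (\<forall>l \<in> set ?P \<union> set ?Q. letter_ok T l)")
    case True
    then have wf: "graph_code_wf T g"
      unfolding graph_ok_iff by blast
    have "word_val K T ?P \<in> H"
      using True word_val_subgroup by simp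
    then show ?thesis
      unfolding snake_reachability_problem_def
      using c True letters graph_ok_relabel graph_vertices_relabel_graph_code graph_edges_relabel[OF wf]
        word_val_relabel ex_reachability_snake_subgroup_iff[OF graph_edges_labels[OF wf]]
      by (simp add: prod_decode_relabel_instance_code)
  next
    case False
    then show ?thesis
      unfolding snake_reachability_problem_def
      using c letters graph_ok_relabel by (auto simp: prod_decode_relabel_instance_code)
  qed
qed

lemma many_one_reductions:
  assumes "computable \<phi>"
  shows "many_one_reducible (infinite_snake_problem K T) (infinite_snake_problem G U)"
    and "many_one_reducible (ouroboros_problem K T) (ouroboros_problem G U)"
    and "many_one_reducible (snake_reachability_problem K T) (snake_reachability_problem G U)"
  unfolding many_one_reducible_def
  using computable_relabel_graph_code[OF assms] computable_relabel_instance_code[OF assms]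
    infinite_snake_problem_relabel ouroboros_problem_relabel snake_reachability_problem_relabel
  by blast+

end

theorem lemma1:
  fixes G :: "('a, 'b) monoid_scheme" and S T :: "'a list" and H :: "'a set" and w :: "nat list"
  assumes "group G"
    and "set S \<subseteq> carrier G" and "generate G (set S) = carrier G"
    and "subgroup H G" and "set T \<subseteq> H" and "generate G (set T) = H"
    and "w \<noteq> []" and "\<forall>l \<in> set w. letter_ok S l"
  shows
    "many_one_reducible (infinite_snake_problem (G\<lparr>carrier := H\<rparr>) T) (infinite_snake_problem G (S @ T))
   \<and> many_one_reducible (ouroboros_problem (G\<lparr>carrier := H\<rparr>) T) (ouroboros_problem G (S @ T))
   \<and> many_one_reducible (snake_reachability_problem (G\<lparr>carrier := H\<rparr>) T) (snake_reachability_problem G (S @ T))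
   \<and> many_one_reducible (infinite_snake_problem G S) (infinite_snake_problem G (S @ [word_val G S w]))
   \<and> many_one_reducible (ouroboros_problem G S) (ouroboros_problem G (S @ [word_val G S w]))
   \<and> many_one_reducible (snake_reachability_problem G S) (snake_reachability_problem G (S @ [word_val G S w]))"
proof -
  \<comment> \<open>Letters invalid for \<open>S\<close> are moved past it so that they stay invalid.\<close>
  let ?shift = "\<lambda>l. l + 2 * length S"
  let ?skip = "\<lambda>l. if l < 2 * length S then l else l + 2"
  interpret subgroup_part: generator_relabelling G H T "S @ T" ?shift
    using assms(1,4,5) by (intro generator_relabelling.intro) (auto simp: letter_ok_def letter_val_def nth_append)
  interpret word_part: generator_relabelling G "carrier G" S "S @ [word_val G S w]" ?skip
    using assms(1,2) group.subgroup_self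
    by (intro generator_relabelling.intro) (auto simp: letter_ok_def letter_val_def nth_append)
  have "computable ?shift" "computable ?skip"
    unfolding computable_iff_total_recursive
    by (intro total_recursive_add total_recursive_If_less total_recursive_hd total_recursive_const)+
  then show ?thesis
    using subgroup_part.many_one_reductions word_part.many_one_reductions by simp
qed

end
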